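(* Let $P(\vec\alpha,\vec\beta,\vec\xi),P'(\vec\alpha,\vec\beta,\vec\xi)\in\mathcal{P}$ be two syntactically compositional predicates with the same parameters, and suppose $P'$ is stronger than $P$. Then the entailments $P'(\vec\alpha,\vec\beta,\vec\xi)\Rightarrow P(\vec\alpha,\vec\beta,\vec\xi)$ and $\exists\vec\beta.\ P'(\vec\alpha,\vec\beta,\vec\xi)\ast P(\vec\beta,\vec\gamma,\vec\xi)\Rightarrow P(\vec\alpha,\vec\gamma,\vec\xi)$ hold (for any pair $\vec\gamma$ of a location and a data variable).
   Context: Separation logic setting: location variables (interpreted in a set $\mathbb{L}$ of locations, with a constant ${\sf nil}$) and data variables; pointer fields $\mathcal{F}$ and data fields $\mathcal{D}$. A state is $(s,h)$ with $s$ a stack assigning values to variables and $h$ a finite partial heap mapping (location, field) pairs to locations or data values. Formulas: pure parts (location (dis)equalities and data constraints in a decidable theory), spatial parts $\mathtt{emp}$, $E\mapsto\rho$, predicate atoms, $\ast$ (separating conjunction over domain-disjoint heaps), with $\land,\lor,\exists$. Predicates are defined by finite sets of rules $Q(E,\vec F)::=\exists\vec Z.\Pi\land\Sigma$ with least-fixed-point semantics; an entailment $A\Rightarrow B$ means every $(s,h)$ satisfying $A$ satisfies $B$. Syntactic compositionality: $P$ has parameters $(\vec\alpha,\vec\beta,\vec\xi)$, $\vec\alpha=(E,C)$ (source), $\vec\beta=(F,H)$ (hole), $E,F$ location variables, $C,H$ data variables, $\vec\xi$ static parameters. $P$ is syntactically compositional if it has exactly one base rule $P(\vec\alpha,\vec\beta,\vec\xi)::=\alpha_1=\beta_1\land\alpha_2=\beta_2\land\mathtt{emp}$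 and at least one inductive rule, every inductive rule being of the form $P(\vec\alpha,\vec\beta,\vec\xi)::=\exists\vec Z.\ \Pi\land\Sigma_1\ast\Sigma_2\ast P(\vec\gamma,\vec\beta,\vec\xi)$ where $\Sigma_1$ is a nonempty separating conjunction of points-to atoms containing a unique points-to atom from $E$ and all location variables of $\vec Z$, whose Gaifman graph is a connected DAG rooted at $E$; $\Sigma_2$ is a possibly empty separating conjunction of predicate atoms whose first arguments are sink vertices of that graph; $\vec\gamma$ consists of variables of $\vec Z$; and the variables of $\vec\beta$ do not occur in $\Pi,\Sigma_1,\Sigma_2,\vec\gamma$. Stronger: $P'$ is stronger than $P$ if for each inductive rule $P'(\vec\alpha,\vec\beta,\vec\xi)::=\exists\vec Z.\ \Pi'\land\Sigma_1\ast\Sigma_2\ast P'(\vec\gamma,\vec\beta,\vec\xi)$ of $P'$ there is an inductive rule $P(\vec\alpha,\vec\beta,\vec\xi)::=\exists\vec Z.\ \Pi\land\Sigma_1\ast\Sigma_2\ast P(\vec\gamma,\vec\beta,\vec\xi)$ of $P$ (same $\vec Z,\Sigma_1,\Sigma_2,\vec\gamma$) such that $\Pi'\Rightarrow\Pi$ is valid. *)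

theory Defs
  imports Main
begin

datatype var = LVar nat | DVar nat

datatype ('l,'d) val = VL 'l | VD 'd

type_synonym ('l,'d) stack = "(nat \<Rightarrow> 'l) \<times> (nat \<Rightarrow> 'd)"

text \<open>A heap is a partial map from (location, field) pairs to values (finiteness of the
  domain is imposed in the entailment relation).\<close>
type_synonym ('l,'d,'f) heap = "('l \<times> 'f) \<Rightarrow> ('l,'d) val option"

fun eval :: "('l,'d) stack \<Rightarrow> var \<Rightarrow> ('l,'d) val" where
  "eval s (LVar n) = VL (fst s n)"
| "eval s (DVar n) = VD (snd s n)"

text \<open>Location terms (a location variable or nil), pure atoms. Data constraints are
  atoms of an arbitrary (decidable) data theory, given by symbols 'c with an interpretation.\<close>
datatype lterm = LNil | LV nat

datatype 'c pure =
    LEq lterm lterm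
  | LNeq lterm lterm
  | DEq nat nat
  | DCon 'c "nat list"

datatype ('f,'p) spat =
    Emp
  | PointsTo nat "('f \<times> var) list"
  | PredAt 'p "var list"

text \<open>A rule  Q(params) ::= \<exists>Z. \<Pi> \<and> \<Sigma>  (\<Pi> a conjunction of pure atoms,
  \<Sigma> a separating conjunction of spatial atoms).\<close>
record ('f,'p,'c) rule =
  rZ :: "var list"
  rpure :: "'c pure list"
  rspat :: "('f,'p) spat list"

record ('f,'p,'c) pdef =
  pparams :: "var list"
  prules :: "('f,'p,'c) rule list"

datatype ('f,'p,'c) form =
    FPure "'c pure"
  | FSp "('f,'p) spat"
  | FStar "('f,'p,'c) form" "('f,'p,'c) form"
  | FAnd "('f,'p,'c) form" "('f,'p,'c) form"
  | FOr "('f,'p,'c) form" "('f,'p,'c) form"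
  | FEx var "('f,'p,'c) form"

fun leval :: "'l \<Rightarrow> ('l,'d) stack \<Rightarrow> lterm \<Rightarrow> 'l" where
  "leval nil s LNil = nil"
| "leval nil s (LV n) = fst s n"

fun pure_sat :: "'l \<Rightarrow> ('c \<Rightarrow> 'd list \<Rightarrow> bool) \<Rightarrow> ('l,'d) stack \<Rightarrow> 'c pure \<Rightarrow> bool" where
  "pure_sat nil I s (LEq a b) = (leval nil s a = leval nil s b)"
| "pure_sat nil I s (LNeq a b) = (leval nil s a \<noteq> leval nil s b)"
| "pure_sat nil I s (DEq a b) = (snd s a = snd s b)"
| "pure_sat nil I s (DCon c ns) = I c (map (snd s) ns)"

fun sat_atom :: "('p \<Rightarrow> ('l,'d) val list \<Rightarrow> ('l,'d,'f) heap \<Rightarrow> bool)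
    \<Rightarrow> ('l,'d) stack \<Rightarrow> ('f,'p) spat \<Rightarrow> ('l,'d,'f) heap \<Rightarrow> bool" where
  "sat_atom R s Emp h = (h = Map.empty)"
| "sat_atom R s (PointsTo n rho) h =
     (dom h = {(fst s n, f) | f. f \<in> fst ` set rho} \<and>
      (\<forall>(f,v) \<in> set rho. h (fst s n, f) = Some (eval s v)))"
| "sat_atom R s (PredAt q vs) h = R q (map (eval s) vs) h"

fun sat_list :: "('p \<Rightarrow> ('l,'d) val list \<Rightarrow> ('l,'d,'f) heap \<Rightarrow> bool)
    \<Rightarrow> ('l,'d) stack \<Rightarrow> ('f,'p) spat list \<Rightarrow> ('l,'d,'f) heap \<Rightarrow> bool" where
  "sat_list R s [] h = (h = Map.empty)"
| "sat_list R s (a # as) h =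
     (\<exists>h1 h2. dom h1 \<inter> dom h2 = {} \<and> h = h1 ++ h2 \<and> sat_atom R s a h1 \<and> sat_list R s as h2)"

lemma sat_atom_mono: "R \<le> R' \<Longrightarrow> sat_atom R s a h \<longrightarrow> sat_atom R' s a h"
  by (cases a) (auto simp: le_fun_def)

lemma sat_list_mono[mono]: "R \<le> R' \<Longrightarrow> sat_list R s as h \<longrightarrow> sat_list R' s as h"
proof (induction as arbitrary: h)
  case Nil then show ?case by simp
next
  case (Cons a as)
  show ?case
  proof
    assume "sat_list R s (a # as) h"
    then obtain h1 h2 where "dom h1 \<inter> dom h2 = {}" "h = h1 ++ h2" "sat_atom R s a h1" "sat_list R s as h2"
      by auto
    moreover have "sat_atom R' s a h1" using sat_atom_mono[OF Cons.prems] \<open>sat_atom R s a h1\<close> by blast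
    moreover have "sat_list R' s as h2" using Cons.IH[OF Cons.prems] \<open>sat_list R s as h2\<close> by blast
    ultimately show "sat_list R' s (a # as) h" by auto
  qed
qed

text \<open>Least-fixed-point semantics of a system of inductive definitions D (predicate
  names to definitions): Q(args) holds on h if some rule of Q is satisfied by a stack
  mapping the formal parameters to args (all other variables existentially quantified).\<close>
inductive holds :: "'l \<Rightarrow> ('c \<Rightarrow> 'd list \<Rightarrow> bool) \<Rightarrow> ('p \<Rightarrow> ('f,'p,'c) pdef)
    \<Rightarrow> 'p \<Rightarrow> ('l,'d) val list \<Rightarrow> ('l,'d,'f) heap \<Rightarrow> bool"
  for nil I D where
  "r \<in> set (prules (D q)) \<Longrightarrow> map (eval s) (pparams (D q)) = args
   \<Longrightarrow> (\<forall>a \<in> set (rpure r). pure_sat nil I s a)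
   \<Longrightarrow> sat_list (holds nil I D) s (rspat r) h
   \<Longrightarrow> holds nil I D q args h"

fun upd :: "('l,'d) stack \<Rightarrow> var \<Rightarrow> ('l,'d) val \<Rightarrow> ('l,'d) stack" where
  "upd s (LVar n) (VL l) = ((fst s)(n := l), snd s)"
| "upd s (DVar n) (VD d) = (fst s, (snd s)(n := d))"
| "upd s _ _ = s"

fun sort_ok :: "var \<Rightarrow> ('l,'d) val \<Rightarrow> bool" where
  "sort_ok (LVar _) (VL _) = True"
| "sort_ok (DVar _) (VD _) = True"
| "sort_ok _ _ = False"

fun fsat :: "'l \<Rightarrow> ('c \<Rightarrow> 'd list \<Rightarrow> bool) \<Rightarrow> ('p \<Rightarrow> ('f,'p,'c) pdef)
    \<Rightarrow> ('l,'d) stack \<Rightarrow> ('l,'d,'f) heap \<Rightarrow> ('f,'p,'c) form \<Rightarrow> bool" where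
  "fsat nil I D s h (FPure a) = pure_sat nil I s a"
| "fsat nil I D s h (FSp a) = sat_atom (holds nil I D) s a h"
| "fsat nil I D s h (FStar A B) =
     (\<exists>h1 h2. dom h1 \<inter> dom h2 = {} \<and> h = h1 ++ h2 \<and> fsat nil I D s h1 A \<and> fsat nil I D s h2 B)"
| "fsat nil I D s h (FAnd A B) = (fsat nil I D s h A \<and> fsat nil I D s h B)"
| "fsat nil I D s h (FOr A B) = (fsat nil I D s h A \<or> fsat nil I D s h B)"
| "fsat nil I D s h (FEx x A) = (\<exists>v. sort_ok x v \<and> fsat nil I D (upd s x v) h A)"

definition entails :: "'l \<Rightarrow> ('c \<Rightarrow> 'd list \<Rightarrow> bool) \<Rightarrow> ('p \<Rightarrow> ('f,'p,'c) pdef)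
    \<Rightarrow> ('f,'p,'c) form \<Rightarrow> ('f,'p,'c) form \<Rightarrow> bool" where
  "entails nil I D A B \<longleftrightarrow>
     (\<forall>s h. finite (dom h) \<longrightarrow> fsat nil I D s h A \<longrightarrow> fsat nil I D s h B)"

definition pvalid :: "'l \<Rightarrow> ('c \<Rightarrow> 'd list \<Rightarrow> bool) \<Rightarrow> 'c pure list \<Rightarrow> 'c pure list \<Rightarrow> bool" where
  "pvalid nil I P1 P2 \<longleftrightarrow>
     (\<forall>s. (\<forall>a \<in> set P1. pure_sat nil I s a) \<longrightarrow> (\<forall>a \<in> set P2. pure_sat nil I s a))"

fun lt_vars :: "lterm \<Rightarrow> var set" where
  "lt_vars LNil = {}"
| "lt_vars (LV n) = {LVar n}"

fun pure_vars :: "'c pure \<Rightarrow> var set" where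
  "pure_vars (LEq a b) = lt_vars a \<union> lt_vars b"
| "pure_vars (LNeq a b) = lt_vars a \<union> lt_vars b"
| "pure_vars (DEq a b) = {DVar a, DVar b}"
| "pure_vars (DCon c ns) = DVar ` set ns"

text \<open>\<Sigma>1 is given as a list of points-to atoms (source, field map).\<close>
definition pts_vars :: "(nat \<times> ('f \<times> var) list) list \<Rightarrow> var set" where
  "pts_vars s1 = (\<Union>(x,rho) \<in> set s1. insert (LVar x) (snd ` set rho))"

definition gaif_verts :: "(nat \<times> ('f \<times> var) list) list \<Rightarrow> nat set" where
  "gaif_verts s1 = {n. LVar n \<in> pts_vars s1}"

definition gaif_edges :: "(nat \<times> ('f \<times> var) list) list \<Rightarrow> (nat \<times> nat) set" where
  "gaif_edges s1 = {(x, y). \<exists>rho fl. (x, rho) \<in> set s1 \<and> (fl, LVar y) \<in> set rho}"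

definition base_rule :: "nat \<Rightarrow> nat \<Rightarrow> nat \<Rightarrow> nat \<Rightarrow> ('f,'p,'c) rule" where
  "base_rule e c f h = \<lparr>rZ = [], rpure = [LEq (LV e) (LV f), DEq c h], rspat = [Emp]\<rparr>"

definition ind_form ::
  "'p \<Rightarrow> nat \<Rightarrow> nat \<Rightarrow> nat \<Rightarrow> nat \<Rightarrow> var list \<Rightarrow> ('f,'p,'c) rule
   \<Rightarrow> var list \<Rightarrow> 'c pure list \<Rightarrow> (nat \<times> ('f \<times> var) list) list \<Rightarrow> ('p \<times> var list) list
   \<Rightarrow> nat \<Rightarrow> nat \<Rightarrow> bool" where
  "ind_form p e c f h xi r Z Pi s1 s2 gl gd \<longleftrightarrow>
     rZ r = Z \<and> rpure r = Pi \<and>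
     rspat r = map (\<lambda>(x,rho). PointsTo x rho) s1 @ map (\<lambda>(q,as). PredAt q as) s2
               @ [PredAt p ([LVar gl, DVar gd, LVar f, DVar h] @ xi)] \<and>
     \<comment> \<open>\<Sigma>1 nonempty, unique points-to from E, contains all location variables of Z\<close>
     s1 \<noteq> [] \<and> length (filter (\<lambda>(x,rho). x = e) s1) = 1 \<and>
     (\<forall>n. LVar n \<in> set Z \<longrightarrow> n \<in> gaif_verts s1) \<and>
     \<comment> \<open>Gaifman graph of \<Sigma>1 is a connected DAG rooted at E\<close>
     acyclic (gaif_edges s1) \<and> (\<forall>v \<in> gaif_verts s1. (e, v) \<in> (gaif_edges s1)\<^sup>*) \<and>
     \<comment> \<open>first arguments of \<Sigma>2 atoms are sink vertices\<close>
     (\<forall>(q,as) \<in> set s2. \<exists>v vs. as = LVar v # vs \<and> v \<in> gaif_verts s1 \<and>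
                                 (\<forall>w. (v, w) \<notin> gaif_edges s1)) \<and>
     \<comment> \<open>\<gamma> consists of variables of Z\<close>
     LVar gl \<in> set Z \<and> DVar gd \<in> set Z \<and>
     \<comment> \<open>the hole variables do not occur in \<Pi>, \<Sigma>1, \<Sigma>2, \<gamma>\<close>
     (let V = (\<Union>a \<in> set Pi. pure_vars a) \<union> pts_vars s1 \<union> (\<Union>(q,as) \<in> set s2. set as)
              \<union> {LVar gl, DVar gd}
      in LVar f \<notin> V \<and> DVar h \<notin> V)"

definition is_ind_rule :: "'p \<Rightarrow> nat \<Rightarrow> nat \<Rightarrow> nat \<Rightarrow> nat \<Rightarrow> var list \<Rightarrow> ('f,'p,'c) rule \<Rightarrow> bool" where
  "is_ind_rule p e c f h xi r \<longleftrightarrow> (\<exists>Z Pi s1 s2 gl gd. ind_form p e c f h xi r Z Pi s1 s2 gl gd)"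

definition synt_comp :: "('p \<Rightarrow> ('f,'p,'c) pdef) \<Rightarrow> 'p \<Rightarrow> bool" where
  "synt_comp D p \<longleftrightarrow>
     (\<exists>e c f h xi. pparams (D p) = [LVar e, DVar c, LVar f, DVar h] @ xi \<and>
        distinct (pparams (D p)) \<and>
        length (filter (\<lambda>r. r = base_rule e c f h) (prules (D p))) = 1 \<and>
        (\<exists>r \<in> set (prules (D p)). is_ind_rule p e c f h xi r) \<and>
        (\<forall>r \<in> set (prules (D p)). r = base_rule e c f h \<or> is_ind_rule p e c f h xi r))"

definition stronger :: "'l \<Rightarrow> ('c \<Rightarrow> 'd list \<Rightarrow> bool) \<Rightarrow> ('p \<Rightarrow> ('f,'p,'c) pdef) \<Rightarrow> 'p \<Rightarrow> 'p \<Rightarrow> bool" where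
  "stronger nil I D P' P \<longleftrightarrow>
     pparams (D P') = pparams (D P) \<and>
     (\<forall>e c f h xi. pparams (D P) = [LVar e, DVar c, LVar f, DVar h] @ xi \<longrightarrow>
        (\<forall>r' \<in> set (prules (D P')). \<forall>Z Pi' s1 s2 gl gd.
           ind_form P' e c f h xi r' Z Pi' s1 s2 gl gd \<longrightarrow>
           (\<exists>r \<in> set (prules (D P)). \<exists>Pi.
              ind_form P e c f h xi r Z Pi s1 s2 gl gd \<and> pvalid nil I Pi' Pi)))"

end

theory Submission
  imports Defs
begin

text \<open>For P' \<Rightarrow> P, every inductive rule of P' is matched
  by a rule of P with the same spatial body and a weaker pure part, and the base rules
  coincide. For composition, the hole (F, H) of a compositional predicate occurs only
  in the recursive atom of an inductive rule, and there only in the hole position; hence an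
  unfolding of P(\<alpha>, \<beta>) can be re-targeted to any other hole \<gamma> by changing the
  stack at F, H alone, and the base case \<alpha> = \<beta> glues on P(\<beta>, \<gamma>).\<close>

fun avars :: "('f,'p) spat \<Rightarrow> var set" where
  "avars Emp = {}"
| "avars (PointsTo n rho) = insert (LVar n) (snd ` set rho)"
| "avars (PredAt q vs) = set vs"

lemma sat_atom_cong:
  assumes "\<And>v. v \<in> avars a \<Longrightarrow> eval s' v = eval s v"
  shows "sat_atom R s' a H = sat_atom R s a H"
proof (cases a)
  case (PointsTo n rho)
  then have source: "fst s' n = fst s n" using assms[of "LVar n"] by simp
  have "eval s' v = eval s v" if "(fl, v) \<in> set rho" for fl v
    using assms that PointsTo by (simp add: rev_image_eqI)
  then have "(\<forall>(fl, v) \<in> set rho. H (fst s' n, fl) = Some (eval s' v)) \<longleftrightarrow>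
             (\<forall>(fl, v) \<in> set rho. H (fst s n, fl) = Some (eval s v))"
    using source by fastforce
  with source show ?thesis using PointsTo by simp
qed (use assms in \<open>simp_all cong: map_cong\<close>)

lemma sat_list_cong:
  assumes "\<And>a v. a \<in> set as \<Longrightarrow> v \<in> avars a \<Longrightarrow> eval s' v = eval s v"
  shows "sat_list R s' as H = sat_list R s as H"
  using assms
proof (induction as arbitrary: H)
  case (Cons a as)
  then have "sat_atom R s' a H' = sat_atom R s a H'" for H'
    by (intro sat_atom_cong) auto
  moreover have "sat_list R s' as H' = sat_list R s as H'" for H'
    using Cons by (metis list.set_intros(2))
  ultimately show ?case by simp
qed simp

lemma pure_sat_cong:
  assumes "\<And>v. v \<in> pure_vars a \<Longrightarrow> eval s' v = eval s v"
  shows "pure_sat nil I s' a = pure_sat nil I s a"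
proof -
  have "leval nil s' t = leval nil s t" if "lt_vars t \<subseteq> pure_vars a" for t
    using that assms[of "LVar _"] by (cases t) auto
  moreover have "snd s' n = snd s n" if "DVar n \<in> pure_vars a" for n
    using assms[OF that] by simp
  ultimately show ?thesis by (cases a) (auto cong: map_cong)
qed

lemma eval_upd_hole:
  "eval ((fst s)(f := l), (snd s)(h := d)) v =
     (if v = LVar f then VL l else if v = DVar h then VD d else eval s v)"
  by (cases v) auto

lemma map_eval_upd_hole:
  "LVar f \<notin> set vs \<Longrightarrow> DVar h \<notin> set vs \<Longrightarrow>
   map (eval ((fst s)(f := l), (snd s)(h := d))) vs = map (eval s) vs"
  by (induction vs) (auto simp: eval_upd_hole)

lemma sat_list_append:
  "sat_list R s (xs @ ys) H \<longleftrightarrow>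
   (\<exists>h1 h2. dom h1 \<inter> dom h2 = {} \<and> H = h1 ++ h2 \<and> sat_list R s xs h1 \<and> sat_list R s ys h2)"
proof (induction xs arbitrary: H)
  case (Cons a xs)
  show ?case
  proof
    assume "sat_list R s ((a # xs) @ ys) H"
    then obtain h1 h2 where "dom h1 \<inter> dom h2 = {}" "H = h1 ++ h2" "sat_atom R s a h1"
      "sat_list R s (xs @ ys) h2" by auto
    moreover from this(4) obtain g1 g2 where "dom g1 \<inter> dom g2 = {}" "h2 = g1 ++ g2"
      "sat_list R s xs g1" "sat_list R s ys g2" using Cons.IH by blast
    ultimately show "\<exists>h1 h2. dom h1 \<inter> dom h2 = {} \<and> H = h1 ++ h2 \<and>
                 sat_list R s (a # xs) h1 \<and> sat_list R s ys h2"
      by (intro exI[of _ "h1 ++ g1"] exI[of _ g2]) auto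
  next
    assume "\<exists>h1 h2. dom h1 \<inter> dom h2 = {} \<and> H = h1 ++ h2 \<and>
              sat_list R s (a # xs) h1 \<and> sat_list R s ys h2"
    then obtain h1 h2 where "dom h1 \<inter> dom h2 = {}" "H = h1 ++ h2"
      "sat_list R s (a # xs) h1" "sat_list R s ys h2" by blast
    moreover from this(3) obtain g1 g2 where "dom g1 \<inter> dom g2 = {}" "h1 = g1 ++ g2"
      "sat_atom R s a g1" "sat_list R s xs g2" by auto
    ultimately have "dom g1 \<inter> dom (g2 ++ h2) = {}" "H = g1 ++ (g2 ++ h2)"
      "dom g2 \<inter> dom h2 = {}" by auto
    with Cons.IH \<open>sat_list R s xs g2\<close> \<open>sat_list R s ys h2\<close>
    have "sat_list R s (xs @ ys) (g2 ++ h2)" by blast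
    with \<open>sat_atom R s a g1\<close> \<open>dom g1 \<inter> dom (g2 ++ h2) = {}\<close> \<open>H = g1 ++ (g2 ++ h2)\<close>
    show "sat_list R s ((a # xs) @ ys) H" unfolding append_Cons sat_list.simps by blast
  qed
qed simp

lemma synt_compD:
  assumes "synt_comp D P" "pparams (D P) = [LVar e, DVar c, LVar f, DVar h] @ xi"
  shows "distinct ([LVar e, DVar c, LVar f, DVar h] @ xi)"
    and "base_rule e c f h \<in> set (prules (D P))"
    and "\<And>r. r \<in> set (prules (D P)) \<Longrightarrow> r = base_rule e c f h \<or> is_ind_rule P e c f h xi r"
proof -
  obtain e0 c0 f0 h0 xi0 where A: "pparams (D P) = [LVar e0, DVar c0, LVar f0, DVar h0] @ xi0"
    "distinct (pparams (D P))"
    "length (filter (\<lambda>r. r = base_rule e0 c0 f0 h0) (prules (D P))) = 1"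
    "\<forall>r \<in> set (prules (D P)). r = base_rule e0 c0 f0 h0 \<or> is_ind_rule P e0 c0 f0 h0 xi0 r"
    using assms(1) unfolding synt_comp_def by blast
  have "e0 = e" "c0 = c" "f0 = f" "h0 = h" "xi0 = xi" using A(1) assms(2) by auto
  moreover have "filter (\<lambda>r. r = base_rule e0 c0 f0 h0) (prules (D P)) \<noteq> []"
    using A(3) by auto
  ultimately show "distinct ([LVar e, DVar c, LVar f, DVar h] @ xi)"
    and "base_rule e c f h \<in> set (prules (D P))"
    and "\<And>r. r \<in> set (prules (D P)) \<Longrightarrow> r = base_rule e c f h \<or> is_ind_rule P e c f h xi r"
    using A assms(2) by (auto simp: filter_empty_conv)
qed

definition ind_body :: "(nat \<times> ('f \<times> var) list) list \<Rightarrow> ('p \<times> var list) list \<Rightarrow> ('f,'p) spat list" where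
  "ind_body s1 s2 = map (\<lambda>(x, rho). PointsTo x rho) s1 @ map (\<lambda>(q, as). PredAt q as) s2"

lemma ind_form_rule:
  "ind_form p e c f h xi r Z Pi s1 s2 gl gd \<Longrightarrow>
   rpure r = Pi \<and> rspat r = ind_body s1 s2 @ [PredAt p ([LVar gl, DVar gd, LVar f, DVar h] @ xi)]"
  unfolding ind_form_def ind_body_def by simp

lemma ind_form_hole_fresh:
  assumes "ind_form p e c f h xi r Z Pi s1 s2 gl gd"
  shows "\<And>a. a \<in> set (ind_body s1 s2) \<Longrightarrow> LVar f \<notin> avars a \<and> DVar h \<notin> avars a"
    and "\<And>a. a \<in> set Pi \<Longrightarrow> LVar f \<notin> pure_vars a \<and> DVar h \<notin> pure_vars a"
    and "gl \<noteq> f" "gd \<noteq> h"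
proof -
  let ?B = "pts_vars s1 \<union> (\<Union>(q, as) \<in> set s2. set as)"
  let ?V = "(\<Union>a \<in> set Pi. pure_vars a) \<union> ?B \<union> {LVar gl, DVar gd}"
  have "LVar f \<notin> ?V \<and> DVar h \<notin> ?V"
    using assms unfolding ind_form_def Let_def Un_assoc by (elim conjE) (rule conjI; assumption)
  then have fresh: "LVar f \<notin> ?B" "DVar h \<notin> ?B"
    and "\<And>a. a \<in> set Pi \<Longrightarrow> LVar f \<notin> pure_vars a \<and> DVar h \<notin> pure_vars a"
    and "gl \<noteq> f" "gd \<noteq> h"
    by auto
  then show "\<And>a. a \<in> set Pi \<Longrightarrow> LVar f \<notin> pure_vars a \<and> DVar h \<notin> pure_vars a"
    and "gl \<noteq> f" "gd \<noteq> h" by auto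
  have "avars a \<subseteq> ?B" if "a \<in> set (ind_body s1 s2)" for a
  proof -
    from that consider x rho where "(x, rho) \<in> set s1" "a = PointsTo x rho"
      | q as where "(q, as) \<in> set s2" "a = PredAt q as"
      unfolding ind_body_def by auto
    then show ?thesis unfolding pts_vars_def by cases force+
  qed
  with fresh show "\<And>a. a \<in> set (ind_body s1 s2) \<Longrightarrow> LVar f \<notin> avars a \<and> DVar h \<notin> avars a"
    by blast
qed

lemma holds_ind_ruleI:
  assumes "r \<in> set (prules (D p))" "ind_form p e c f h xi r Z Pi s1 s2 gl gd"
    and "\<forall>a \<in> set Pi. pure_sat nil I s a"
    and "sat_list (holds nil I D) s (ind_body s1 s2) H1"
    and "holds nil I D p (map (eval s) ([LVar gl, DVar gd, LVar f, DVar h] @ xi)) H2"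
    and "dom H1 \<inter> dom H2 = {}"
  shows "holds nil I D p (map (eval s) (pparams (D p))) (H1 ++ H2)"
proof (rule holds.intros[where D = D and q = p, OF assms(1)])
  show "map (eval s) (pparams (D p)) = map (eval s) (pparams (D p))" ..
  show "\<forall>a \<in> set (rpure r). pure_sat nil I s a"
    using assms(2,3) ind_form_rule by metis
  show "sat_list (holds nil I D) s (rspat r) (H1 ++ H2)"
    using assms(2,4-6) by (auto simp: ind_form_rule sat_list_append)
qed

lemma holds_ind_rule_retarget:
  assumes "r \<in> set (prules (D p))" "ind_form p e c f h xi r Z Pi s1 s2 gl gd"
    and params: "pparams (D p) = [LVar e, DVar c, LVar f, DVar h] @ xi"
    and dist: "distinct ([LVar e, DVar c, LVar f, DVar h] @ xi)"
    and "\<forall>a \<in> set Pi. pure_sat nil I s a"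
    and "sat_list (holds nil I D) s (ind_body s1 s2) H1"
    and "holds nil I D p ([VL (fst s gl), VD (snd s gd), VL lg, VD dk] @ map (eval s) xi) H2"
    and "dom H1 \<inter> dom H2 = {}"
  shows "holds nil I D p ([VL (fst s e), VD (snd s c), VL lg, VD dk] @ map (eval s) xi) (H1 ++ H2)"
proof -
  define s' where "s' = ((fst s)(f := lg), (snd s)(h := dk))"
  note fresh = ind_form_hole_fresh[OF assms(2)]
  have xi: "map (eval s') xi = map (eval s) xi"
    using dist unfolding s'_def by (simp add: map_eval_upd_hole)
  have unchanged: "eval s' v = eval s v" if "v \<noteq> LVar f" "v \<noteq> DVar h" for v
    using that unfolding s'_def by (simp add: eval_upd_hole)
  have "holds nil I D p (map (eval s') (pparams (D p))) (H1 ++ H2)"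
  proof (rule holds_ind_ruleI[where D = D and p = p, OF assms(1,2) _ _ _ assms(8)])
    have "pure_sat nil I s' a = pure_sat nil I s a" if "a \<in> set Pi" for a
      using fresh(2)[OF that] by (intro pure_sat_cong unchanged) auto
    then show "\<forall>a \<in> set Pi. pure_sat nil I s' a" using assms(5) by simp
    have "sat_list (holds nil I D) s' (ind_body s1 s2) H1 = sat_list (holds nil I D) s (ind_body s1 s2) H1"
      using fresh(1) by (intro sat_list_cong unchanged) auto
    then show "sat_list (holds nil I D) s' (ind_body s1 s2) H1" using assms(6) by simp
    show "holds nil I D p (map (eval s') ([LVar gl, DVar gd, LVar f, DVar h] @ xi)) H2"
      using assms(7) fresh(3,4) by (simp only: map_append xi) (simp add: s'_def)
  qed
  moreover have "e \<noteq> f" "c \<noteq> h" using dist by auto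
  ultimately show ?thesis using params xi unfolding s'_def by simp
qed

lemma holds_stronger:
  assumes sc: "synt_comp D P" and sc': "synt_comp D P'"
    and params: "pparams (D P) = [LVar e, DVar c, LVar f, DVar h] @ xi"
    and st: "stronger nil I D P' P"
    and "holds nil I D P' args H"
  shows "holds nil I D P args H"
proof -
  have params': "pparams (D P') = pparams (D P)" using st unfolding stronger_def by simp
  have "holds nil I D q args H \<Longrightarrow> q = P' \<Longrightarrow> holds nil I D P args H" for q args H
  proof (induction rule: holds.induct)
    case (1 r q s args H)
    let ?R = "\<lambda>q args H. holds nil I D q args H \<and> (q = P' \<longrightarrow> holds nil I D P args H)"
    have args: "map (eval s) (pparams (D P)) = args" using 1 params' by simp
    have body: "sat_list (holds nil I D) s (rspat r) H"
      using 1(4) sat_list_mono[of ?R "holds nil I D"] by (auto simp: le_fun_def)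
    from synt_compD(3)[OF sc' params'[unfolded params]] 1(1,5)
    consider (base) "r = base_rule e c f h" | (ind) "is_ind_rule P' e c f h xi r" by auto
    then show ?case
    proof cases
      case base
      then show ?thesis
        using holds.intros[where D = D and q = P, OF synt_compD(2)[OF sc params] args] 1(3) body
        by simp
    next
      case ind
      then obtain Z Pi' s1 s2 gl gd where ind': "ind_form P' e c f h xi r Z Pi' s1 s2 gl gd"
        unfolding is_ind_rule_def by blast
      with st params 1(1,5) obtain r2 Pi where r2: "r2 \<in> set (prules (D P))"
        "ind_form P e c f h xi r2 Z Pi s1 s2 gl gd" "pvalid nil I Pi' Pi"
        unfolding stronger_def by blast
      from 1(4) obtain H1 H2 where H: "dom H1 \<inter> dom H2 = {}" "H = H1 ++ H2"
        "sat_list ?R s (ind_body s1 s2) H1"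
        "?R P' (map (eval s) ([LVar gl, DVar gd, LVar f, DVar h] @ xi)) H2"
        unfolding ind_form_rule[OF ind', THEN conjunct2] sat_list_append by auto
      have "holds nil I D P (map (eval s) (pparams (D P))) (H1 ++ H2)"
      proof (rule holds_ind_ruleI[where D = D and p = P, OF r2(1,2) _ _ _ H(1)])
        show "\<forall>a \<in> set Pi. pure_sat nil I s a"
          using 1(3) r2(3) ind_form_rule[OF ind'] unfolding pvalid_def by blast
        show "sat_list (holds nil I D) s (ind_body s1 s2) H1"
          using H(3) sat_list_mono[of ?R "holds nil I D"] by (auto simp: le_fun_def)
      qed (use H(4) in simp)
      then show ?thesis using args H(2) by simp
    qed
  qed
  with assms(5) show ?thesis by blast
qed

lemma holds_compose:
  assumes sc: "synt_comp D P" and params: "pparams (D P) = [LVar e, DVar c, LVar f, DVar h] @ xi"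
    and "holds nil I D P ([VL le, VD dc, VL lf, VD dh] @ xs) H1"
    and "holds nil I D P ([VL lf, VD dh, VL lg, VD dk] @ xs) H2"
    and "dom H1 \<inter> dom H2 = {}"
  shows "holds nil I D P ([VL le, VD dc, VL lg, VD dk] @ xs) (H1 ++ H2)"
proof -
  define composable where "composable args H1 \<longleftrightarrow>
    (\<forall>le dc lf dh xs H2 lg dk. args = [VL le, VD dc, VL lf, VD dh] @ xs \<longrightarrow>
       holds nil I D P ([VL lf, VD dh, VL lg, VD dk] @ xs) H2 \<longrightarrow> dom H1 \<inter> dom H2 = {} \<longrightarrow>
       holds nil I D P ([VL le, VD dc, VL lg, VD dk] @ xs) (H1 ++ H2))" for args H1
  note dist = synt_compD(1)[OF sc params]
  have "holds nil I D q args H1 \<Longrightarrow> q = P \<Longrightarrow> composable args H1" for q args H1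
  proof (induction rule: holds.induct)
    case (1 r q s args H)
    let ?R = "\<lambda>q args H. holds nil I D q args H \<and> (q = P \<longrightarrow> composable args H)"
    show ?case unfolding composable_def
    proof (intro allI impI)
      fix le dc lf dh xs H2 lg dk
      assume args: "args = [VL le, VD dc, VL lf, VD dh] @ xs"
        and H2: "holds nil I D P ([VL lf, VD dh, VL lg, VD dk] @ xs) H2"
        and disj: "dom H \<inter> dom H2 = {}"
      have stack: "fst s e = le" "snd s c = dc" "fst s f = lf" "snd s h = dh" "map (eval s) xi = xs"
        using 1(2,5) args params by auto
      from synt_compD(3)[OF sc params] 1(1,5)
      consider (base) "r = base_rule e c f h" | (ind) "is_ind_rule P e c f h xi r" by auto
      then show "holds nil I D P ([VL le, VD dc, VL lg, VD dk] @ xs) (H ++ H2)"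
      proof cases
        case base
        then have "le = lf" "dc = dh" "H = Map.empty"
          using 1(3,4) stack by (auto simp: base_rule_def)
        then show ?thesis using H2 by simp
      next
        case ind
        then obtain Z Pi s1 s2 gl gd where ind: "ind_form P e c f h xi r Z Pi s1 s2 gl gd"
          unfolding is_ind_rule_def by blast
        from 1(4) obtain Ha Hb where H: "dom Ha \<inter> dom Hb = {}" "H = Ha ++ Hb"
          "sat_list ?R s (ind_body s1 s2) Ha"
          "?R P (map (eval s) ([LVar gl, DVar gd, LVar f, DVar h] @ xi)) Hb"
          unfolding ind_form_rule[OF ind, THEN conjunct2] sat_list_append by auto
        have body: "sat_list (holds nil I D) s (ind_body s1 s2) Ha"
          using H(3) sat_list_mono[of ?R "holds nil I D"] by (auto simp: le_fun_def)
        have "dom Hb \<inter> dom H2 = {}" using disj H(2) by auto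
        then have "holds nil I D P ([VL (fst s gl), VD (snd s gd), VL lg, VD dk] @ xs) (Hb ++ H2)"
          using H(4) H2 stack unfolding composable_def by simp
        then have "holds nil I D P ([VL (fst s e), VD (snd s c), VL lg, VD dk] @ map (eval s) xi)
                (Ha ++ (Hb ++ H2))"
          using 1(3) ind_form_rule[OF ind] body H(1,2) disj stack
          by (intro holds_ind_rule_retarget[where D = D and p = P, OF 1(1)[unfolded 1(5)] ind params dist])
            auto
        then show ?thesis using H(2) stack by simp
      qed
    qed
  qed
  with assms(3-5) show ?thesis unfolding composable_def by blast
qed

theorem theorem3:
  fixes nil :: 'l and I :: "'c \<Rightarrow> 'd list \<Rightarrow> bool" and D :: "'p \<Rightarrow> ('f,'p,'c) pdef"
    and P P' :: 'p and e c f h g k :: nat and xi :: "var list"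
  assumes "synt_comp D P" and "synt_comp D P'"
    and "pparams (D P') = pparams (D P)"
    and "pparams (D P) = [LVar e, DVar c, LVar f, DVar h] @ xi"
    and "stronger nil I D P' P"
    and "g \<noteq> f" and "k \<noteq> h"
  shows "entails nil I D (FSp (PredAt P' ([LVar e, DVar c, LVar f, DVar h] @ xi)))
                         (FSp (PredAt P ([LVar e, DVar c, LVar f, DVar h] @ xi)))
       \<and> entails nil I D
           (FEx (LVar f) (FEx (DVar h)
              (FStar (FSp (PredAt P' ([LVar e, DVar c, LVar f, DVar h] @ xi)))
                     (FSp (PredAt P ([LVar f, DVar h, LVar g, DVar k] @ xi))))))
           (FSp (PredAt P ([LVar e, DVar c, LVar g, DVar k] @ xi)))"
  (is "?weaken \<and> entails _ _ _ ?star ?joined")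
proof
  note stronger = holds_stronger[OF assms(1,2,4,5)]
  show ?weaken unfolding entails_def by (simp add: stronger)
  show "entails nil I D ?star ?joined"
    unfolding entails_def
  proof (intro allI impI)
    fix s H
    assume "fsat nil I D s H ?star"
    then obtain l d H1 H2 where "dom H1 \<inter> dom H2 = {}" "H = H1 ++ H2"
      "holds nil I D P' ([VL (fst s e), VD (snd s c), VL l, VD d] @ map (eval s) xi) H1"
      "holds nil I D P ([VL l, VD d, VL (fst s g), VD (snd s k)] @ map (eval s) xi) H2"
      using synt_compD(1)[OF assms(1,4)] assms(6,7)
      by (auto elim!: sort_ok.elims simp: map_eval_upd_hole)
    then show "fsat nil I D s H ?joined"
      using holds_compose[OF assms(1,4) stronger] by simp
  qed
qed

end
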